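(* Let $n$ be a positive integer and let $k$ be an even integer with $n/2+1\le k\le n-1$. Then the graph $H_{n,k}$ is uniquely vector colorable.
   Context: For $x,y\in\mathbb{Z}_2^n$, the weight of $x$ is its number of nonzero coordinates and $d(x,y)$ denotes Hamming distance. $H_{n,k}$ is the graph whose vertices are the even-weight elements of $\mathbb{Z}_2^n$, with $x\sim y$ iff $x+y$ has weight exactly $k$ (addition is bitwise XOR). A vector $t$-coloring of a graph $G$ (with $t\ge 2$) is an assignment $i\mapsto p_i$ of unit vectors in some $\mathbb{R}^d$ to the vertices of $G$ such that $\langle p_i,p_j\rangle\le -1/(t-1)$ whenever $i\sim j$. The vector chromatic number $\chi_v(G)$ is the smallest $t\ge 2$ for which a vector $t$-coloring exists; a vector $\chi_v(G)$-coloring is called optimal. $G$ is uniquely vector colorable (UVC) if any two optimal vector colorings $i\mapsto p_i\in\mathbb{R}^d$ and $i\mapsto q_i\in\mathbb{R}^{d'}$ of $G$ have the same Gram matrix, i.e. $\langle p_i,p_j\rangle=\langle q_i,q_j\rangle$ for all vertices $i,j$. *)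

theory Defs
  imports Complex_Main
begin

text \<open>Elements of Z_2^n are represented as boolean lists of length n.\<close>

definition weight :: "bool list \<Rightarrow> nat" where
  "weight x = length (filter id x)"

definition bxor :: "bool list \<Rightarrow> bool list \<Rightarrow> bool list" where
  "bxor x y = map2 (\<noteq>) x y"

definition H_verts :: "nat \<Rightarrow> bool list set" where
  "H_verts n = {x. length x = n \<and> even (weight x)}"

definition H_adj :: "nat \<Rightarrow> bool list \<Rightarrow> bool list \<Rightarrow> bool" where
  "H_adj k x y \<longleftrightarrow> weight (bxor x y) = k"

text \<open>Vectors in R^d are represented as functions nat => real, of which only
  the coordinates 0..d-1 matter.\<close>

definition inner_d :: "nat \<Rightarrow> (nat \<Rightarrow> real) \<Rightarrow> (nat \<Rightarrow> real) \<Rightarrow> real" where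
  "inner_d d u v = (\<Sum>i<d. u i * v i)"

definition vector_coloring ::
  "'v set \<Rightarrow> ('v \<Rightarrow> 'v \<Rightarrow> bool) \<Rightarrow> real \<Rightarrow> nat \<Rightarrow> ('v \<Rightarrow> nat \<Rightarrow> real) \<Rightarrow> bool" where
  "vector_coloring V E t d p \<longleftrightarrow> t \<ge> 2 \<and>
     (\<forall>i\<in>V. inner_d d (p i) (p i) = 1) \<and>
     (\<forall>i\<in>V. \<forall>j\<in>V. E i j \<longrightarrow> inner_d d (p i) (p j) \<le> - 1 / (t - 1))"

definition vector_chromatic_number :: "'v set \<Rightarrow> ('v \<Rightarrow> 'v \<Rightarrow> bool) \<Rightarrow> real" where
  "vector_chromatic_number V E = Inf {t. \<exists>d p. vector_coloring V E t d p}"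

definition optimal_vector_coloring ::
  "'v set \<Rightarrow> ('v \<Rightarrow> 'v \<Rightarrow> bool) \<Rightarrow> nat \<Rightarrow> ('v \<Rightarrow> nat \<Rightarrow> real) \<Rightarrow> bool" where
  "optimal_vector_coloring V E d p \<longleftrightarrow>
     vector_coloring V E (vector_chromatic_number V E) d p"

definition uniquely_vector_colorable :: "'v set \<Rightarrow> ('v \<Rightarrow> 'v \<Rightarrow> bool) \<Rightarrow> bool" where
  "uniquely_vector_colorable V E \<longleftrightarrow>
     (\<forall>d p d' q. optimal_vector_coloring V E d p \<longrightarrow> optimal_vector_coloring V E d' q \<longrightarrow>
        (\<forall>i\<in>V. \<forall>j\<in>V. inner_d d (p i) (p j) = inner_d d' (q i) (q j)))"

end

theory Submission
  imports Defs
begin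

text \<open>
  Fourier analysis on \<open>\<int>\<^sub>2\<^sup>n\<close> pins down every optimal colouring. For unit vectors \<open>p\<^sub>x\<close>
  on the even vertices, the sum of \<open>\<langle>p\<^sub>x, p\<^sub>y\<rangle>\<close> over adjacent pairs is
  \<open>2\<^sup>-\<^sup>n \<Sum>\<^sub>s K\<^sub>k(|s|) Q(s)\<close> and the number of vertices is \<open>2\<^sup>-\<^sup>n \<Sum>\<^sub>s Q(s)\<close>, where
  \<open>Q(s) \<ge> 0\<close> is the Fourier mass of the colouring at the character \<open>s\<close> and \<open>K\<^sub>k\<close> is the
  Krawtchouk polynomial. For even \<open>k \<ge> n/2 + 1\<close>, \<open>K\<^sub>k(j)\<close> attains its minimum
  \<open>(n - 2k) C(n,k) / n\<close> exactly at \<open>j = 1\<close> and \<open>j = n - 1\<close>. Hence the average edge has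
  \<open>\<langle>p\<^sub>x, p\<^sub>y\<rangle> \<ge> 1 - 2k/n\<close>, which gives \<open>\<chi>\<^sub>v = 2k/(2k - n)\<close>, attained by
  \<open>x \<mapsto> ((-1)\<^sup>x\<^sup>\<^sub>i / \<surd>n)\<^sub>i\<close>; and in an optimal colouring all Fourier mass sits on the characters
  of weight 1 and \<open>n - 1\<close>, which agree on even vectors. Every row \<open>y \<mapsto> \<langle>p\<^sub>x, p\<^sub>y\<rangle>\<close> is then a
  combination of the coordinate signs \<open>(-1)\<^sup>y\<^sup>\<^sub>i\<close>, and being \<open>1 - 2k/n\<close> on all neighbours of
  \<open>x\<close> forces equal coefficients, i.e. \<open>\<langle>p\<^sub>x, p\<^sub>y\<rangle> = 1 - 2 d(x, y)/n\<close>.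
\<close>

section \<open>The Boolean cube and its characters\<close>

definition cube :: "nat \<Rightarrow> bool list set" where
  "cube n = {xs. length xs = n}"

lemma finite_cube: "finite (cube n)"
  using finite_lists_length_eq[of "UNIV :: bool set" n] by (simp add: cube_def)

lemma cube_0: "cube 0 = {[]}"
  by (auto simp: cube_def)

lemma cube_Suc: "cube (Suc n) = Cons True ` cube n \<union> Cons False ` cube n"
proof
  show "cube (Suc n) \<subseteq> Cons True ` cube n \<union> Cons False ` cube n"
  proof
    fix x assume "x \<in> cube (Suc n)"
    then obtain b y where "x = b # y" "length y = n" by (cases x) (auto simp: cube_def)
    then show "x \<in> Cons True ` cube n \<union> Cons False ` cube n" by (cases b) (auto simp: cube_def)
  qed
qed (auto simp: cube_def)

lemma sum_cube_Suc:
  "(\<Sum>x\<in>cube (Suc n). f x) = (\<Sum>x\<in>cube n. f (True # x)) + (\<Sum>x\<in>cube n. f (False # x))"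
  unfolding cube_Suc
  by (subst sum.union_disjoint) (auto simp: finite_cube sum.reindex)

lemma H_verts_subset_cube: "H_verts n \<subseteq> cube n"
  by (auto simp: H_verts_def cube_def)

lemma finite_H_verts: "finite (H_verts n)"
  using finite_subset[OF H_verts_subset_cube finite_cube] .

lemma weight_Nil [simp]: "weight [] = 0"
  by (simp add: weight_def)

lemma weight_Cons [simp]: "weight (b # x) = (if b then 1 else 0) + weight x"
  by (simp add: weight_def)

lemma weight_append: "weight (x @ y) = weight x + weight y"
  by (simp add: weight_def)

lemma weight_replicate: "weight (replicate j b) = (if b then j else 0)"
  by (induction j) auto

lemma weight_le_length: "weight x \<le> length x"
  by (simp add: weight_def)

lemma weight_map_Not: "weight (map Not z) = length z - weight z"
  by (induction z) (auto simp: Suc_diff_le weight_le_length)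

lemma weight_eq_card: "weight x = card {i. i < length x \<and> x ! i}"
  by (simp add: weight_def length_filter_conv_card)

lemma weight_eq_0_iff: "weight z = 0 \<longleftrightarrow> z = replicate (length z) False"
  by (induction z) auto

lemma ex_cube_weight: "j \<le> n \<Longrightarrow> \<exists>s\<in>cube n. weight s = j"
  by (intro bexI[of _ "replicate j True @ replicate (n - j) False"])
    (simp_all add: cube_def weight_append weight_replicate)

lemma weight_map_mem_upt: "A \<subseteq> {..<n} \<Longrightarrow> weight (map (\<lambda>l. l \<in> A) [0..<n]) = card A"
proof -
  assume A: "A \<subseteq> {..<n}"
  have "{i. i < n \<and> map (\<lambda>l. l \<in> A) [0..<n] ! i} = A"
    using A by auto
  then show ?thesis
    by (simp add: weight_eq_card)
qed

lemma bxor_Cons [simp]: "bxor (a # x) (b # y) = (a \<noteq> b) # bxor x y"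
  by (simp add: bxor_def)

lemma bxor_Nil [simp]: "bxor [] y = []" "bxor x [] = []"
  by (simp_all add: bxor_def)

lemma length_bxor [simp]: "length (bxor x y) = min (length x) (length y)"
  by (simp add: bxor_def)

lemma nth_bxor: "i < length x \<Longrightarrow> i < length y \<Longrightarrow> bxor x y ! i = (x ! i \<noteq> y ! i)"
  by (simp add: bxor_def)

lemma bxor_self: "bxor x x = replicate (length x) False"
  by (induction x) auto

lemma bxor_eq_zero_iff:
  "length x = length y \<Longrightarrow> bxor x y = replicate (length x) False \<longleftrightarrow> x = y"
  by (induction x y rule: list_induct2) auto

lemma bxor_bxor_cancel: "length x = length z \<Longrightarrow> bxor x (bxor x z) = z"
  by (induction x z rule: list_induct2) auto

lemma even_weight_bxor:
  "length x = length y \<Longrightarrow> even (weight (bxor x y)) \<longleftrightarrow> (even (weight x) \<longleftrightarrow> even (weight y))"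
  by (induction x y rule: list_induct2) auto

lemma bij_betw_bxor: "x \<in> cube n \<Longrightarrow> bij_betw (bxor x) (cube n) (cube n)"
  by (rule bij_betw_byWitness[where f' = "bxor x"]) (auto simp: cube_def bxor_bxor_cancel)

lemma bij_betw_map_Not: "bij_betw (map Not) (cube n) (cube n)"
  by (rule bij_betw_byWitness[where f' = "map Not"]) (auto simp: cube_def comp_def)

definition sgn_bool :: "bool \<Rightarrow> real" where
  "sgn_bool b = (if b then -1 else 1)"

lemma sgn_bool_mult_self: "sgn_bool p * sgn_bool p = 1"
  by (simp add: sgn_bool_def)

lemma sum_sgn_bool_mult: "length x = length y \<Longrightarrow>
    (\<Sum>i<length x. sgn_bool (x ! i) * sgn_bool (y ! i)) = real (length x) - 2 * real (weight (bxor x y))"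
proof (induction x y rule: list_induct2)
  case (Cons a x b y)
  then show ?case
    unfolding length_Cons sum.lessThan_Suc_shift by (simp add: sgn_bool_def)
qed simp

lemma sum_sgn_bool_bxor_indicator:
  fixes a :: "nat \<Rightarrow> real"
  assumes "length x = n" "A \<subseteq> {..<n}"
  shows "(\<Sum>i<n. a i * sgn_bool (bxor x (map (\<lambda>l. l \<in> A) [0..<n]) ! i)) =
    (\<Sum>i<n. a i * sgn_bool (x ! i)) - 2 * (\<Sum>i\<in>A. a i * sgn_bool (x ! i))"
proof -
  let ?b = "\<lambda>i. a i * sgn_bool (x ! i)"
  have "(\<Sum>i<n. a i * sgn_bool (bxor x (map (\<lambda>l. l \<in> A) [0..<n]) ! i)) =
      (\<Sum>i<n. ?b i - 2 * (if i \<in> A then ?b i else 0))"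
    using assms(1) by (intro sum.cong refl) (simp add: nth_bxor sgn_bool_def)
  also have "\<dots> = (\<Sum>i<n. ?b i) - 2 * sum ?b ({..<n} \<inter> A)"
    by (simp add: sum_subtractf sum_distrib_left sum.inter_restrict)
  finally show ?thesis
    using assms(2) by (simp add: Int_absorb1)
qed

fun chi :: "bool list \<Rightarrow> bool list \<Rightarrow> real" where
  "chi (a # s) (b # x) = (if a \<and> b then -1 else 1) * chi s x"
| "chi _ _ = 1"

lemma chi_commute: "chi s x = chi x s"
  by (induction s x rule: chi.induct) auto

lemma chi_bxor:
  "length x = length s \<Longrightarrow> length y = length s \<Longrightarrow> chi s x * chi s y = chi s (bxor x y)"
proof (induction s arbitrary: x y)
  case (Cons a s)
  then obtain b x' c y' where "x = b # x'" "y = c # y'" by (cases x; cases y) auto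
  with Cons show ?case by auto
qed simp

lemma chi_zero: "chi s (replicate m False) = 1"
proof (induction s arbitrary: m)
  case (Cons a s)
  then show ?case by (cases m) simp_all
qed simp

lemma chi_map_Not: "length s = length z \<Longrightarrow> chi (map Not s) z = (-1) ^ weight z * chi s z"
proof (induction s arbitrary: z)
  case (Cons a s)
  then obtain b z' where "z = b # z'" by (cases z) auto
  with Cons show ?case by auto
qed simp

lemma chi_weight_1:
  "length y = length s \<Longrightarrow> weight s = 1 \<Longrightarrow> chi s y = (\<Sum>i<length s. if s ! i then sgn_bool (y ! i) else 0)"
proof (induction s y rule: list_induct2')
  case (4 a s b y)
  show ?case
  proof (cases a)
    case True
    then have zero: "s = replicate (length s) False"
      using "4.prems" weight_eq_0_iff by simp
    then have "chi s y = 1"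
      by (metis chi_commute chi_zero)
    moreover have "(\<Sum>i<length s. if s ! i then sgn_bool (y ! i) else 0) = 0"
      by (subst zero) simp
    ultimately show ?thesis
      using True unfolding length_Cons sum.lessThan_Suc_shift by (simp add: sgn_bool_def cong: if_cong)
  next
    case False
    then show ?thesis
      using "4" unfolding length_Cons sum.lessThan_Suc_shift by (simp cong: if_cong)
  qed
qed auto

lemma sum_chi_cube:
  "u \<in> cube n \<Longrightarrow> (\<Sum>s\<in>cube n. chi s u) = (if u = replicate n False then 2 ^ n else 0)"
proof (induction n arbitrary: u)
  case 0
  then show ?case by (simp add: cube_0 cube_def)
next
  case (Suc n)
  then obtain b u' where u: "u = b # u'" "u' \<in> cube n" by (cases u) (auto simp: cube_def)
  show ?case
    using Suc.IH[OF u(2)] by (cases b) (simp_all add: sum_cube_Suc u sum_negf)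
qed

lemma sum_chi_mult:
  assumes "x \<in> cube n" "y \<in> cube n"
  shows "(\<Sum>s\<in>cube n. chi s x * chi s y) = (if x = y then 2 ^ n else 0)"
proof -
  have "(\<Sum>s\<in>cube n. chi s x * chi s y) = (\<Sum>s\<in>cube n. chi s (bxor x y))"
    using assms by (intro sum.cong) (auto simp: cube_def chi_bxor)
  also have "\<dots> = (if x = y then 2 ^ n else 0)"
    using assms sum_chi_cube[of "bxor x y" n] bxor_eq_zero_iff[of x y] by (simp add: cube_def)
  finally show ?thesis .
qed

lemma sum_chi_mult3:
  assumes "x \<in> cube n" "y \<in> cube n" "z \<in> cube n"
  shows "(\<Sum>s\<in>cube n. chi s z * chi s x * chi s y) = (if z = bxor x y then 2 ^ n else 0)"
proof -
  have "(\<Sum>s\<in>cube n. chi s z * chi s x * chi s y) = (\<Sum>s\<in>cube n. chi s z * chi s (bxor x y))"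
    using assms by (intro sum.cong refl) (simp add: cube_def mult.assoc chi_bxor[of x _ y])
  then show ?thesis
    using assms sum_chi_mult[of z n "bxor x y"] by (simp add: cube_def)
qed

lemma quadratic_form_fourier:
  assumes "A \<subseteq> cube n"
  shows "(\<Sum>x\<in>A. \<Sum>y\<in>A. F x * F y * h (bxor x y)) =
    (\<Sum>s\<in>cube n. (\<Sum>z\<in>cube n. chi s z * h z) * (\<Sum>x\<in>A. chi s x * F x) ^ 2) / 2 ^ n"
proof -
  let ?T = "\<lambda>s z x y. (chi s z * h z) * (chi s x * F x) * (chi s y * F y)"
  have finA: "finite A"
    using assms finite_cube finite_subset by blast
  have each_term: "F x * F y * h (bxor x y) = (\<Sum>s\<in>cube n. \<Sum>z\<in>cube n. ?T s z x y) / 2 ^ n"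
    if xy: "x \<in> A" "y \<in> A" for x y
  proof -
    have xy': "x \<in> cube n" "y \<in> cube n" "bxor x y \<in> cube n"
      using xy assms by (auto simp: cube_def subset_iff)
    have "(\<Sum>s\<in>cube n. \<Sum>z\<in>cube n. ?T s z x y) =
        (\<Sum>z\<in>cube n. (h z * F x * F y) * (\<Sum>s\<in>cube n. chi s z * chi s x * chi s y))"
      by (subst sum.swap) (simp add: sum_distrib_left algebra_simps)
    also have "\<dots> = (\<Sum>z\<in>cube n. if z = bxor x y then h z * F x * F y * 2 ^ n else 0)"
      using xy' by (intro sum.cong) (simp_all add: sum_chi_mult3)
    also have "\<dots> = h (bxor x y) * F x * F y * 2 ^ n"
      using xy' finite_cube by simp
    finally show ?thesis by simp
  qed
  have "(\<Sum>x\<in>A. \<Sum>y\<in>A. F x * F y * h (bxor x y)) =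
      (\<Sum>x\<in>A. \<Sum>y\<in>A. \<Sum>s\<in>cube n. \<Sum>z\<in>cube n. ?T s z x y) / 2 ^ n"
    by (simp add: each_term sum_divide_distrib)
  also have "(\<Sum>x\<in>A. \<Sum>y\<in>A. \<Sum>s\<in>cube n. \<Sum>z\<in>cube n. ?T s z x y) =
      (\<Sum>s\<in>cube n. \<Sum>x\<in>A. \<Sum>y\<in>A. \<Sum>z\<in>cube n. ?T s z x y)"
    by (simp add: sum.swap[of _ A "cube n"])
  also have "\<dots> = (\<Sum>s\<in>cube n. (\<Sum>z\<in>cube n. chi s z * h z) * (\<Sum>x\<in>A. chi s x * F x) ^ 2)"
    by (simp add: power2_eq_square sum_product sum_distrib_left mult_ac)
  finally show ?thesis .
qed

lemma fourier_inversion: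
  assumes "A \<subseteq> cube n" "y \<in> A"
  shows "(\<Sum>s\<in>cube n. chi s y * (\<Sum>x\<in>A. chi s x * g x)) = 2 ^ n * g y"
proof -
  have finA: "finite A"
    using assms finite_cube finite_subset by blast
  have "(\<Sum>s\<in>cube n. chi s y * (\<Sum>x\<in>A. chi s x * g x)) =
      (\<Sum>s\<in>cube n. \<Sum>x\<in>A. g x * (chi s y * chi s x))"
    by (simp add: sum_distrib_left mult_ac)
  also have "\<dots> = (\<Sum>x\<in>A. g x * (\<Sum>s\<in>cube n. chi s y * chi s x))"
    by (subst sum.swap) (simp add: sum_distrib_left)
  also have "\<dots> = (\<Sum>x\<in>A. if y = x then g x * 2 ^ n else 0)"
    using assms sum_chi_mult[of y n] by (intro sum.cong) (auto simp: subset_iff)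
  also have "\<dots> = 2 ^ n * g y"
    using assms finA by simp
  finally show ?thesis .
qed

section \<open>Krawtchouk numbers\<close>

text \<open>\<open>krawtchouk n k j\<close> is \<open>K\<^sub>k(j) = \<Sum>\<^bsub>|z| = k\<^esub> (-1)\<^sup>\<langle>\<^sup>s\<^sup>,\<^sup>z\<^sup>\<rangle>\<close> for any \<open>s\<close> of length \<open>n\<close> and
  weight \<open>j\<close> (see \<open>sphere_char_sum_eq_krawtchouk\<close>); the recursion splits off a first
  coordinate of \<open>s\<close> that is 1 whenever \<open>j > 0\<close>.\<close>

fun krawtchouk :: "nat \<Rightarrow> nat \<Rightarrow> nat \<Rightarrow> int" where
  "krawtchouk n 0 j = 1"
| "krawtchouk 0 (Suc k) j = 0"
| "krawtchouk (Suc n) (Suc k) 0 = krawtchouk n (Suc k) 0 + krawtchouk n k 0"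
| "krawtchouk (Suc n) (Suc k) (Suc j) = krawtchouk n (Suc k) j - krawtchouk n k j"

lemma krawtchouk_Suc_Suc:
  "j \<le> n \<Longrightarrow> krawtchouk (Suc n) (Suc k) j = krawtchouk n (Suc k) j + krawtchouk n k j"
proof (induction n arbitrary: k j)
  case 0
  then show ?case by simp
next
  case (Suc n)
  show ?case
  proof (cases j)
    case (Suc j')
    then show ?thesis
      using Suc.IH[of j' k] Suc.IH[of j' "k - 1"] Suc.prems by (cases k) auto
  qed simp
qed

lemma krawtchouk_at_0: "krawtchouk n k 0 = int (n choose k)"
proof (induction n arbitrary: k)
  case 0
  then show ?case by (cases k) auto
next
  case (Suc n)
  then show ?case by (cases k) auto
qed

lemma krawtchouk_degree_1: "j \<le> n \<Longrightarrow> krawtchouk n 1 j = int n - 2 * int j"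
proof (induction n arbitrary: j)
  case (Suc n)
  then show ?case by (cases j) (auto simp: krawtchouk_at_0)
qed simp

lemma krawtchouk_at_1_binomial:
  assumes "1 \<le> k" "k \<le> n"
  shows "real n * krawtchouk n k 1 = (real n - 2 * real k) * (n choose k)"
proof -
  obtain n' k' where nk: "n = Suc n'" "k = Suc k'"
    using assms by (cases n; cases k) auto
  have "(n - k) * (n choose k) = n * (n' choose k)"
    using binomial_absorb_comp[of n k] nk by simp
  then have comp: "(real n - real k) * (n choose k) = real n * (n' choose k)"
    using assms(2) by (metis of_nat_diff of_nat_mult)
  have "k * (n choose k) = n * (n' choose k')"
    using times_binomial_minus1_eq[of k n] nk by simp
  then have absorb: "real k * (n choose k) = real n * (n' choose k')"
    by (metis of_nat_mult)
  have "krawtchouk n k 1 = int (n' choose k) - int (n' choose k')"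
    using nk by (simp add: krawtchouk_at_0)
  then have "real n * krawtchouk n k 1 = real n * (n' choose k) - real n * (n' choose k')"
    by (simp add: right_diff_distrib)
  also have "\<dots> = (real n - 2 * real k) * (n choose k)"
    using comp absorb by (simp add: algebra_simps)
  finally show ?thesis .
qed

lemma abs_krawtchouk_Suc_le:
  "j \<le> n \<Longrightarrow> \<bar>krawtchouk (Suc n) (Suc m) j\<bar> \<le> \<bar>krawtchouk n (Suc m) j\<bar> + \<bar>krawtchouk n m j\<bar>"
  "\<bar>krawtchouk (Suc n) (Suc m) (Suc j)\<bar> \<le> \<bar>krawtchouk n (Suc m) j\<bar> + \<bar>krawtchouk n m j\<bar>"
  by (simp_all add: krawtchouk_Suc_Suc abs_triangle_ineq abs_triangle_ineq4)

definition sphere_char_sum :: "bool list \<Rightarrow> nat \<Rightarrow> real" where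
  "sphere_char_sum s k = (\<Sum>z\<in>cube (length s). if weight z = k then chi s z else 0)"

lemma sphere_char_sum_0 [simp]: "sphere_char_sum s 0 = 1"
proof -
  let ?o = "replicate (length s) False"
  have "sphere_char_sum s 0 = (\<Sum>z\<in>cube (length s). if z = ?o then chi s z else 0)"
    by (auto simp: sphere_char_sum_def weight_eq_0_iff cube_def intro!: sum.cong)
  also have "\<dots> = 1"
    using sum.delta[OF finite_cube, of ?o "chi s"] by (simp add: cube_def chi_zero)
  finally show ?thesis .
qed

lemma sphere_char_sum_Cons_Suc:
  "sphere_char_sum (a # s) (Suc k) = sphere_char_sum s (Suc k) + (if a then -1 else 1) * sphere_char_sum s k"
  by (simp add: sphere_char_sum_def sum_cube_Suc sum_distrib_left if_distrib cong: if_cong)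

lemma sphere_char_sum_eq_krawtchouk:
  "sphere_char_sum s k = krawtchouk (length s) k (weight s)"
proof (induction s arbitrary: k)
  case Nil
  then show ?case by (cases k) (simp_all add: sphere_char_sum_def cube_0)
next
  case (Cons a s)
  then show ?case
    using weight_le_length[of s]
    by (cases k) (auto simp: sphere_char_sum_Cons_Suc krawtchouk_Suc_Suc)
qed

lemma sphere_char_sum_map_Not: "sphere_char_sum (map Not s) k = (-1) ^ k * sphere_char_sum s k"
  unfolding sphere_char_sum_def
  by (auto simp: sum_distrib_left cube_def chi_map_Not intro!: sum.cong)

lemma sphere_char_sum_complement:
  assumes "k \<le> length s"
  shows "sphere_char_sum s (length s - k) = (-1) ^ weight s * sphere_char_sum s k"
proof -
  let ?n = "length s"
  have "sphere_char_sum s (?n - k) =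
      (\<Sum>z\<in>cube ?n. if weight (map Not z) = ?n - k then chi s (map Not z) else 0)"
    unfolding sphere_char_sum_def by (rule sum.reindex_bij_betw[OF bij_betw_map_Not, symmetric])
  also have "\<dots> = (\<Sum>z\<in>cube ?n. (-1) ^ weight s * (if weight z = k then chi s z else 0))"
  proof (rule sum.cong)
    fix z assume z: "z \<in> cube ?n"
    then have "?n - weight z = ?n - k \<longleftrightarrow> weight z = k"
      using weight_le_length[of z] assms by (auto simp: cube_def)
    then show "(if weight (map Not z) = ?n - k then chi s (map Not z) else 0) =
        (-1) ^ weight s * (if weight z = k then chi s z else 0)"
      using z chi_map_Not[of z s] by (simp add: weight_map_Not chi_commute cube_def)
  qed simp
  finally show ?thesis by (simp add: sphere_char_sum_def sum_distrib_left)
qed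

lemma krawtchouk_reflect_point: "j \<le> n \<Longrightarrow> krawtchouk n k (n - j) = (-1) ^ k * krawtchouk n k j"
proof -
  assume "j \<le> n"
  then obtain s where s: "length s = n" "weight s = j"
    using ex_cube_weight by (auto simp: cube_def)
  have "real_of_int (krawtchouk n k (n - j)) = sphere_char_sum (map Not s) k"
    using s by (simp add: sphere_char_sum_eq_krawtchouk weight_map_Not)
  also have "\<dots> = real_of_int ((-1) ^ k * krawtchouk n k j)"
    by (simp only: sphere_char_sum_map_Not) (simp add: sphere_char_sum_eq_krawtchouk s)
  finally show ?thesis by (simp only: of_int_eq_iff)
qed

lemma krawtchouk_reflect_degree:
  "k \<le> n \<Longrightarrow> j \<le> n \<Longrightarrow> krawtchouk n (n - k) j = (-1) ^ j * krawtchouk n k j"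
proof -
  assume "k \<le> n" "j \<le> n"
  moreover obtain s where s: "length s = n" "weight s = j"
    using ex_cube_weight \<open>j \<le> n\<close> by (auto simp: cube_def)
  ultimately have "real_of_int (krawtchouk n (n - k) j) = real_of_int ((-1) ^ j * krawtchouk n k j)"
    using sphere_char_sum_complement[of k s] by (simp add: sphere_char_sum_eq_krawtchouk)
  then show ?thesis by (simp only: of_int_eq_iff)
qed

lemma krawtchouk_at_1_middle:
  "krawtchouk (2 * M + 5) (M + 2) 1 = krawtchouk (2 * M + 3) (M + 1) 1 + krawtchouk (2 * M + 3) M 1"
proof (cases M)
  case 0
  then show ?thesis by (simp add: numeral_eq_Suc krawtchouk_at_0)
next
  case (Suc M')
  have "krawtchouk (2 * M + 5) (M + 2) 1 = int ((2*M+4) choose (M+2)) - int ((2*M+4) choose (M+1))"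
    by (simp add: numeral_eq_Suc krawtchouk_at_0)
  moreover have "krawtchouk (2 * M + 3) (M + 1) 1 = int ((2*M+2) choose (M+1)) - int ((2*M+2) choose M)"
    by (simp add: numeral_eq_Suc krawtchouk_at_0)
  moreover have "krawtchouk (2 * M + 3) M 1 = int ((2*M+2) choose M) - int ((2*M+2) choose M')"
    using Suc by (simp add: numeral_eq_Suc krawtchouk_at_0)
  moreover have "(2*M+4) choose (M+2) = ((2*M+2) choose M) + 2 * ((2*M+2) choose (M+1)) + ((2*M+2) choose (M+2))"
    by (simp add: numeral_eq_Suc)
  moreover have "(2*M+4) choose (M+1) = ((2*M+2) choose M') + 2 * ((2*M+2) choose M) + ((2*M+2) choose (M+1))"
    using Suc by (simp add: numeral_eq_Suc)
  moreover have "(2*M+2) choose (M+2) = (2*M+2) choose M"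
    using binomial_symmetric[of "M+2" "2*M+2"] by simp
  ultimately show ?thesis by simp
qed

text \<open>For \<open>n = 2m + 1\<close> the Pascal step would need the bound for degree \<open>m\<close> at length
  \<open>2m\<close>, where it fails; instead we descend two lengths and use \<open>K\<^sub>m = \<plusminus>K\<^sub>m\<^sub>-\<^sub>1\<close> at length
  \<open>2m - 1\<close>.\<close>

lemma abs_krawtchouk_le_at_1_middle:
  fixes M :: nat
  assumes upper: "\<And>i. 1 \<le> i \<Longrightarrow> i \<le> 2 * M + 2 \<Longrightarrow>
      \<bar>krawtchouk (2 * M + 3) (M + 1) i\<bar> \<le> krawtchouk (2 * M + 3) (M + 1) 1"
    and lower: "\<And>i. 1 \<le> i \<Longrightarrow> i \<le> 2 * M + 2 \<Longrightarrow>
      \<bar>krawtchouk (2 * M + 3) M i\<bar> \<le> krawtchouk (2 * M + 3) M 1"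
    and j: "1 \<le> j" "j \<le> 2 * M + 4"
  shows "\<bar>krawtchouk (2 * M + 5) (M + 2) j\<bar> \<le> krawtchouk (2 * M + 5) (M + 2) 1"
proof -
  let ?n0 = "2 * M + 3" and ?K = "krawtchouk (2 * M + 5) (M + 2)"
  have at_1: "?K 1 = krawtchouk ?n0 (M + 1) 1 + krawtchouk ?n0 M 1"
    by (rule krawtchouk_at_1_middle)
  then have nonneg: "?K 1 \<ge> 0"
    using upper[of 1] lower[of 1] by simp
  consider "j = 1" | "j = 2 * M + 4" | i where "j = Suc i" "1 \<le> i" "i \<le> 2 * M + 2"
    using j by (cases j) force+
  then show ?thesis
  proof cases
    case 1
    then show ?thesis using nonneg by simp
  next
    case 2
    have "?K (2 * M + 5 - 1) = (-1) ^ (M + 2) * ?K 1"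
      by (rule krawtchouk_reflect_point) simp
    then have "?K j = (-1) ^ (M + 2) * ?K 1"
      using 2 by (simp add: add.commute)
    then show ?thesis using nonneg by (simp add: abs_mult)
  next
    case 3
    have "?K j = krawtchouk ?n0 (M + 2) i - krawtchouk ?n0 M i"
      using 3 by (simp add: numeral_eq_Suc krawtchouk_Suc_Suc)
    moreover have "krawtchouk ?n0 (M + 2) i = (-1) ^ i * krawtchouk ?n0 (M + 1) i"
      using krawtchouk_reflect_degree[of "M + 1" ?n0 i] 3 by (simp add: numeral_eq_Suc)
    moreover have "\<bar>(-1) ^ i * krawtchouk ?n0 (M + 1) i\<bar> = \<bar>krawtchouk ?n0 (M + 1) i\<bar>"
      by (simp add: abs_mult)
    ultimately have "\<bar>?K j\<bar> \<le> \<bar>krawtchouk ?n0 (M + 1) i\<bar> + \<bar>krawtchouk ?n0 M i\<bar>"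
      by (metis abs_triangle_ineq4)
    then show ?thesis using upper[of i] lower[of i] 3 at_1 by simp
  qed
qed

lemma abs_krawtchouk_le_at_1_Suc:
  assumes "2 \<le> n"
    and upper: "\<And>i. 1 \<le> i \<Longrightarrow> i \<le> n - 1 \<Longrightarrow> \<bar>krawtchouk n (Suc m) i\<bar> \<le> krawtchouk n (Suc m) 1"
    and lower: "\<And>i. 1 \<le> i \<Longrightarrow> i \<le> n - 1 \<Longrightarrow> \<bar>krawtchouk n m i\<bar> \<le> krawtchouk n m 1"
    and j: "1 \<le> j" "j \<le> n"
  shows "\<bar>krawtchouk (Suc n) (Suc m) j\<bar> \<le> krawtchouk (Suc n) (Suc m) 1"
proof -
  obtain i where i: "1 \<le> i" "i \<le> n - 1"
    and step: "\<bar>krawtchouk (Suc n) (Suc m) j\<bar> \<le> \<bar>krawtchouk n (Suc m) i\<bar> + \<bar>krawtchouk n m i\<bar>"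
  proof (cases "j \<le> n - 1")
    case True
    then show ?thesis
      using that[of j] abs_krawtchouk_Suc_le(1)[of j n m] j by simp
  next
    case False
    then show ?thesis
      using that[of "j - 1"] abs_krawtchouk_Suc_le(2)[of n m "j - 1"] j assms(1) by simp
  qed
  have "krawtchouk (Suc n) (Suc m) 1 = krawtchouk n (Suc m) 1 + krawtchouk n m 1"
    using krawtchouk_Suc_Suc[of 1 n m] assms(1) by (simp del: krawtchouk.simps)
  then show ?thesis
    using step upper[OF i] lower[OF i] by simp
qed

lemma abs_krawtchouk_le_at_1:
  "2 * m < n \<Longrightarrow> 1 \<le> j \<Longrightarrow> j \<le> n - 1 \<Longrightarrow> \<bar>krawtchouk n m j\<bar> \<le> krawtchouk n m 1"
proof (induction n arbitrary: m j rule: less_induct)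
  case (less n)
  show ?case
  proof (cases m)
    case (Suc m')
    consider "2 * m + 2 \<le> n" | "n = 2 * m + 1"
      using less.prems by linarith
    then show ?thesis
    proof cases
      case 1
      then obtain n' where "n = Suc n'"
        by (cases n) auto
      then show ?thesis
        using abs_krawtchouk_le_at_1_Suc[of n' m' j] less.IH[of n'] less.prems Suc 1 by simp
    next
      case 2
      show ?thesis
      proof (cases m')
        case 0
        then show ?thesis
          using 2 Suc less.prems krawtchouk_degree_1[of j 3] krawtchouk_degree_1[of 1 3] by auto
      next
        case (Suc M)
        have "\<bar>krawtchouk (2 * M + 5) (M + 2) j\<bar> \<le> krawtchouk (2 * M + 5) (M + 2) 1"
          by (rule abs_krawtchouk_le_at_1_middle)
            (use less.IH[of "2 * M + 3"] 2 less.prems \<open>m = Suc m'\<close> Suc in auto)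
        then show ?thesis
          using 2 \<open>m = Suc m'\<close> Suc by (simp add: numeral_eq_Suc)
      qed
    qed
  qed simp
qed

lemma abs_krawtchouk_less_at_1:
  "2 * m + 2 \<le> n \<Longrightarrow> 1 \<le> m \<Longrightarrow> 2 \<le> j \<Longrightarrow> j \<le> n - 2 \<Longrightarrow>
    \<bar>krawtchouk n m j\<bar> < krawtchouk n m 1"
proof (induction n arbitrary: m j rule: less_induct)
  case (less n)
  show ?case
  proof (cases "m = 1")
    case True
    then show ?thesis
      using less.prems krawtchouk_degree_1[of j n] krawtchouk_degree_1[of 1 n] by auto
  next
    case False
    then obtain m' where m': "m = Suc m'" "1 \<le> m'"
      using less.prems by (cases m) auto
    obtain n' where n': "n = Suc n'"
      using less.prems by (cases n) auto
    have bounds: "\<bar>krawtchouk n' m i\<bar> \<le> krawtchouk n' m 1" "\<bar>krawtchouk n' m' i\<bar> < krawtchouk n' m' 1"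
      if "2 \<le> i" "i \<le> n' - 2" for i
      using abs_krawtchouk_le_at_1[of m n' i] less.IH[of n' m' i] that less.prems n' m' by auto
    obtain i where i: "2 \<le> i" "i \<le> n' - 2"
      and step: "\<bar>krawtchouk n m j\<bar> \<le> \<bar>krawtchouk n' m i\<bar> + \<bar>krawtchouk n' m' i\<bar>"
    proof (cases "j \<le> n' - 2")
      case True
      then show ?thesis
        using that[of j] abs_krawtchouk_Suc_le(1)[of j n' m'] less.prems n' m' by simp
    next
      case False
      then show ?thesis
        using that[of "j - 1"] abs_krawtchouk_Suc_le(2)[of n' m' "j - 1"] less.prems n' m' by simp
    qed
    have "krawtchouk n m 1 = krawtchouk n' m 1 + krawtchouk n' m' 1"
      using krawtchouk_Suc_Suc[of 1 n' m'] n' m' less.prems by (simp del: krawtchouk.simps)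
    then show ?thesis
      using step bounds[OF i] by simp
  qed
qed

lemma krawtchouk_at_1_less:
  assumes "even k" "n + 2 \<le> 2 * k" "k \<le> n - 1" "j \<le> n" "j \<noteq> 1" "j \<noteq> n - 1"
  shows "krawtchouk n k 1 < krawtchouk n k j"
proof -
  define m where "m = n - k"
  have k: "k = n - m" "m \<le> n" and m: "2 * m + 2 \<le> n" "1 \<le> m"
    using assms by (auto simp: m_def)
  have reflect: "krawtchouk n k i = (-1) ^ i * krawtchouk n m i" if "i \<le> n" for i
    using krawtchouk_reflect_degree[OF k(2) that] k(1) by simp
  have at_1: "krawtchouk n k 1 = - krawtchouk n m 1"
    using reflect[of 1] assms by simp
  have "krawtchouk n m 1 > 0"
    using abs_krawtchouk_less_at_1[OF m, of 2] m by fastforce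
  then have negative: "krawtchouk n k 1 < 0"
    using at_1 by simp
  have binomial: "krawtchouk n k 0 > 0"
    using assms by (simp add: krawtchouk_at_0)
  consider "j = 0" | "j = n" | "2 \<le> j" "j \<le> n - 2"
    using assms by linarith
  then show ?thesis
  proof cases
    case 1
    then show ?thesis using negative binomial by simp
  next
    case 2
    have "krawtchouk n k (n - 0) = (-1) ^ k * krawtchouk n k 0"
      by (rule krawtchouk_reflect_point) simp
    then show ?thesis using 2 assms(1) negative binomial by simp
  next
    case 3
    have "\<bar>krawtchouk n m j\<bar> < krawtchouk n m 1"
      using abs_krawtchouk_less_at_1[OF m 3] .
    moreover have "\<bar>krawtchouk n k j\<bar> = \<bar>krawtchouk n m j\<bar>"
      using reflect[OF assms(4)] by (simp add: abs_mult)
    ultimately show ?thesis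
      using at_1 by linarith
  qed
qed

lemma krawtchouk_at_1_le:
  assumes "even k" "n + 2 \<le> 2 * k" "k \<le> n - 1" "j \<le> n"
  shows "krawtchouk n k 1 \<le> krawtchouk n k j"
proof -
  have "krawtchouk n k (n - 1) = (-1) ^ k * krawtchouk n k 1"
    using assms by (intro krawtchouk_reflect_point) simp
  then show ?thesis
    using krawtchouk_at_1_less[OF assms] assms(1) by (cases "j = 1 \<or> j = n - 1") auto
qed

section \<open>Vector colourings of \<open>H\<^sub>n\<^sub>,\<^sub>k\<close>\<close>

definition hamming_cosine :: "nat \<Rightarrow> nat \<Rightarrow> real" where
  "hamming_cosine n w = (real n - 2 * real w) / real n"

lemma krawtchouk_at_1_eq_hamming_cosine:
  "1 \<le> k \<Longrightarrow> k \<le> n \<Longrightarrow> real_of_int (krawtchouk n k 1) = hamming_cosine n k * (n choose k)"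
  using krawtchouk_at_1_binomial[of k n] by (simp add: hamming_cosine_def field_simps)

definition sign_coloring :: "nat \<Rightarrow> bool list \<Rightarrow> nat \<Rightarrow> real" where
  "sign_coloring n x r = sgn_bool (x ! r) / sqrt (real n)"

lemma inner_sign_coloring:
  assumes "length x = n" "length y = n"
  shows "inner_d n (sign_coloring n x) (sign_coloring n y) = hamming_cosine n (weight (bxor x y))"
proof -
  have "inner_d n (sign_coloring n x) (sign_coloring n y) = (\<Sum>r<n. sgn_bool (x ! r) * sgn_bool (y ! r)) / n"
    by (simp add: inner_d_def sign_coloring_def sum_divide_distrib)
  then show ?thesis
    using sum_sgn_bool_mult[of x y] assms by (simp add: hamming_cosine_def)
qed

lemma H_adj_0_iff: "x \<in> cube n \<Longrightarrow> y \<in> cube n \<Longrightarrow> H_adj 0 x y \<longleftrightarrow> x = y"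
  using bxor_eq_zero_iff[of x y] by (simp add: H_adj_def weight_eq_0_iff cube_def)

lemma H_degree:
  assumes "even k" "x \<in> H_verts n"
  shows "(\<Sum>y\<in>H_verts n. if H_adj k x y then 1 else 0) = real (n choose k)"
proof -
  have x: "x \<in> cube n" "even (weight x)"
    using assms H_verts_subset_cube by (auto simp: H_verts_def)
  have "(\<Sum>y\<in>H_verts n. if H_adj k x y then 1 else 0) = (\<Sum>y\<in>cube n. if weight (bxor x y) = k then 1 else 0 :: real)"
  proof (rule sum.mono_neutral_cong_left)
    show "\<forall>y\<in>cube n - H_verts n. (if weight (bxor x y) = k then 1 else 0 :: real) = 0"
      using x assms(1) even_weight_bxor[of x] by (auto simp: H_verts_def cube_def)
  qed (auto simp: finite_cube H_verts_subset_cube H_adj_def)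
  also have "\<dots> = (\<Sum>z\<in>cube n. if weight z = k then 1 else 0)"
    by (rule sum.reindex_bij_betw[OF bij_betw_bxor[OF x(1)]])
  also have "\<dots> = sphere_char_sum (replicate n False) k"
    unfolding sphere_char_sum_def length_replicate
    by (intro sum.cong refl) (simp add: chi_commute[of "replicate n False"] chi_zero)
  also have "\<dots> = real (n choose k)"
    by (simp add: sphere_char_sum_eq_krawtchouk weight_replicate krawtchouk_at_0)
  finally show ?thesis .
qed

definition adjacent_inner_sum :: "nat \<Rightarrow> nat \<Rightarrow> nat \<Rightarrow> (bool list \<Rightarrow> nat \<Rightarrow> real) \<Rightarrow> real" where
  "adjacent_inner_sum n k d p =
    (\<Sum>x\<in>H_verts n. \<Sum>y\<in>H_verts n. if H_adj k x y then inner_d d (p x) (p y) else 0)"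

definition fourier_mass :: "nat \<Rightarrow> nat \<Rightarrow> (bool list \<Rightarrow> nat \<Rightarrow> real) \<Rightarrow> bool list \<Rightarrow> real" where
  "fourier_mass n d p s = (\<Sum>r<d. (\<Sum>x\<in>H_verts n. chi s x * p x r) ^ 2)"

lemma fourier_mass_nonneg: "fourier_mass n d p s \<ge> 0"
  by (simp add: fourier_mass_def sum_nonneg)

lemma adjacent_inner_sum_fourier:
  "adjacent_inner_sum n k d p = (\<Sum>s\<in>cube n. sphere_char_sum s k * fourier_mass n d p s) / 2 ^ n"
proof -
  let ?E = "H_verts n"
  define h where "h z = (if weight z = k then 1 else 0 :: real)" for z
  have "adjacent_inner_sum n k d p = (\<Sum>x\<in>?E. \<Sum>y\<in>?E. \<Sum>r<d. p x r * p y r * h (bxor x y))"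
    unfolding adjacent_inner_sum_def by (intro sum.cong refl) (simp add: H_adj_def inner_d_def h_def)
  also have "\<dots> = (\<Sum>r<d. \<Sum>x\<in>?E. \<Sum>y\<in>?E. p x r * p y r * h (bxor x y))"
    by (simp add: sum.swap[of _ "{..<d}"])
  also have "\<dots> = (\<Sum>r<d. (\<Sum>s\<in>cube n. sphere_char_sum s k * (\<Sum>x\<in>?E. chi s x * p x r) ^ 2) / 2 ^ n)"
  proof (intro sum.cong refl)
    fix r
    have "(\<Sum>z\<in>cube n. chi s z * h z) = sphere_char_sum s k" if "s \<in> cube n" for s
      using that by (simp add: sphere_char_sum_def h_def cube_def if_distrib cong: if_cong)
    then show "(\<Sum>x\<in>?E. \<Sum>y\<in>?E. p x r * p y r * h (bxor x y)) =
        (\<Sum>s\<in>cube n. sphere_char_sum s k * (\<Sum>x\<in>?E. chi s x * p x r) ^ 2) / 2 ^ n"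
      using quadratic_form_fourier[OF H_verts_subset_cube, of "\<lambda>x. p x r" h] by simp
  qed
  also have "\<dots> = (\<Sum>s\<in>cube n. sphere_char_sum s k * fourier_mass n d p s) / 2 ^ n"
    by (simp add: fourier_mass_def sum_divide_distrib[symmetric] sum_distrib_left sum.swap[of _ "{..<d}"])
  finally show ?thesis .
qed

lemma card_H_verts_fourier:
  assumes unit: "\<forall>x\<in>H_verts n. inner_d d (p x) (p x) = 1"
  shows "real (card (H_verts n)) = (\<Sum>s\<in>cube n. fourier_mass n d p s) / 2 ^ n"
proof -
  let ?E = "H_verts n"
  have "(\<Sum>y\<in>?E. if H_adj 0 x y then inner_d d (p x) (p y) else 0) = 1" if x: "x \<in> ?E" for x
  proof -
    have "(\<Sum>y\<in>?E. if H_adj 0 x y then inner_d d (p x) (p y) else 0) =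
        (\<Sum>y\<in>?E. if x = y then inner_d d (p x) (p y) else 0)"
      using x H_adj_0_iff[of x n] H_verts_subset_cube by (intro sum.cong) auto
    then show ?thesis
      using x unit finite_H_verts by simp
  qed
  then have "real (card ?E) = adjacent_inner_sum n 0 d p"
    by (simp add: adjacent_inner_sum_def)
  then show ?thesis
    by (simp add: adjacent_inner_sum_fourier)
qed

lemma adjacent_inner_sum_excess:
  fixes c :: real
  assumes "\<forall>x\<in>H_verts n. inner_d d (p x) (p x) = 1"
  shows "adjacent_inner_sum n k d p - c * card (H_verts n) =
    (\<Sum>s\<in>cube n. (sphere_char_sum s k - c) * fourier_mass n d p s) / 2 ^ n"
  using card_H_verts_fourier[OF assms]
  by (simp add: adjacent_inner_sum_fourier left_diff_distrib sum_subtractf sum_distrib_left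
      diff_divide_distrib)

lemma adjacent_inner_sum_ge:
  assumes "even k" "n + 2 \<le> 2 * k" "k \<le> n - 1"
    and "\<forall>x\<in>H_verts n. inner_d d (p x) (p x) = 1"
  shows "real_of_int (krawtchouk n k 1) * card (H_verts n) \<le> adjacent_inner_sum n k d p"
proof -
  have "sphere_char_sum s k \<ge> real_of_int (krawtchouk n k 1)" if "s \<in> cube n" for s
    using that krawtchouk_at_1_le[OF assms(1-3), of "weight s"] weight_le_length[of s]
    by (simp add: sphere_char_sum_eq_krawtchouk cube_def)
  then have "0 \<le> (\<Sum>s\<in>cube n. (sphere_char_sum s k - krawtchouk n k 1) * fourier_mass n d p s) / 2 ^ n"
    by (intro divide_nonneg_nonneg sum_nonneg mult_nonneg_nonneg fourier_mass_nonneg) simp_all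
  then show ?thesis
    using adjacent_inner_sum_excess[OF assms(4), where k = k and c = "krawtchouk n k 1"] by simp
qed

lemma adjacent_inner_sum_le:
  assumes "even k" "\<forall>x\<in>H_verts n. \<forall>y\<in>H_verts n. H_adj k x y \<longrightarrow> inner_d d (p x) (p y) \<le> \<beta>"
  shows "adjacent_inner_sum n k d p \<le> \<beta> * (card (H_verts n) * (n choose k))"
proof -
  have "adjacent_inner_sum n k d p \<le> (\<Sum>x\<in>H_verts n. \<Sum>y\<in>H_verts n. \<beta> * (if H_adj k x y then 1 else 0))"
    unfolding adjacent_inner_sum_def using assms(2) by (intro sum_mono) auto
  also have "\<dots> = \<beta> * (card (H_verts n) * (n choose k))"
    using H_degree[OF assms(1)] by (simp add: sum_distrib_left[symmetric])
  finally show ?thesis .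
qed

lemma hamming_cosine_le_adjacent_bound:
  assumes nk: "even k" "n + 2 \<le> 2 * k" "k \<le> n - 1"
    and unit: "\<forall>x\<in>H_verts n. inner_d d (p x) (p x) = 1"
    and adj: "\<forall>x\<in>H_verts n. \<forall>y\<in>H_verts n. H_adj k x y \<longrightarrow> inner_d d (p x) (p y) \<le> \<beta>"
  shows "hamming_cosine n k \<le> \<beta>"
proof -
  have "replicate n False \<in> H_verts n"
    by (simp add: H_verts_def weight_replicate)
  then have "card (H_verts n) > 0"
    using finite_H_verts card_gt_0_iff by blast
  then have "0 < real (card (H_verts n) * (n choose k))"
    using nk by simp
  moreover have "hamming_cosine n k * (card (H_verts n) * (n choose k)) \<le> \<beta> * (card (H_verts n) * (n choose k))"
    using adjacent_inner_sum_ge[OF nk unit] adjacent_inner_sum_le[OF nk(1) adj]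
      krawtchouk_at_1_eq_hamming_cosine[of k n] nk by (simp add: mult_ac)
  ultimately show ?thesis
    using mult_right_le_imp_le by blast
qed

lemma adjacent_inner_sum_eq_of_tight:
  assumes nk: "even k" "n + 2 \<le> 2 * k" "k \<le> n - 1"
    and unit: "\<forall>x\<in>H_verts n. inner_d d (p x) (p x) = 1"
    and tight: "\<forall>x\<in>H_verts n. \<forall>y\<in>H_verts n. H_adj k x y \<longrightarrow> inner_d d (p x) (p y) \<le> hamming_cosine n k"
  shows "adjacent_inner_sum n k d p = hamming_cosine n k * (card (H_verts n) * (n choose k))"
  using adjacent_inner_sum_ge[OF nk unit] adjacent_inner_sum_le[OF nk(1) tight]
    krawtchouk_at_1_eq_hamming_cosine[of k n] nk by (simp add: mult_ac)

lemma adjacent_inner_eq_of_tight: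
  assumes nk: "even k" "n + 2 \<le> 2 * k" "k \<le> n - 1"
    and unit: "\<forall>x\<in>H_verts n. inner_d d (p x) (p x) = 1"
    and tight: "\<forall>x\<in>H_verts n. \<forall>y\<in>H_verts n. H_adj k x y \<longrightarrow> inner_d d (p x) (p y) \<le> hamming_cosine n k"
    and xy: "x \<in> H_verts n" "y \<in> H_verts n" "H_adj k x y"
  shows "inner_d d (p x) (p y) = hamming_cosine n k"
proof -
  let ?E = "H_verts n"
  define D where "D x y = (if H_adj k x y then hamming_cosine n k - inner_d d (p x) (p y) else 0)" for x y
  have D_nonneg: "\<forall>x\<in>?E. \<forall>y\<in>?E. D x y \<ge> 0"
    using tight by (simp add: D_def)
  have "(\<Sum>x\<in>?E. \<Sum>y\<in>?E. D x y) =
      hamming_cosine n k * (\<Sum>x\<in>?E. \<Sum>y\<in>?E. if H_adj k x y then 1 else 0) - adjacent_inner_sum n k d p"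
    by (simp add: D_def adjacent_inner_sum_def sum_distrib_left if_distrib sum_subtractf[symmetric]
        cong: if_cong)
  also have "\<dots> = 0"
    using adjacent_inner_sum_eq_of_tight[OF nk unit tight] H_degree[OF nk(1)] by simp
  finally have "\<forall>x\<in>?E. \<forall>y\<in>?E. D x y = 0"
    using D_nonneg finite_H_verts by (simp add: sum_nonneg sum_nonneg_eq_0_iff)
  then have "D x y = 0"
    using xy by blast
  then show ?thesis
    using xy by (simp add: D_def)
qed

lemma fourier_mass_eq_0_of_tight:
  assumes nk: "even k" "n + 2 \<le> 2 * k" "k \<le> n - 1"
    and unit: "\<forall>x\<in>H_verts n. inner_d d (p x) (p x) = 1"
    and tight: "\<forall>x\<in>H_verts n. \<forall>y\<in>H_verts n. H_adj k x y \<longrightarrow> inner_d d (p x) (p y) \<le> hamming_cosine n k"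
    and s: "s \<in> cube n" "weight s \<noteq> 1" "weight s \<noteq> n - 1"
  shows "fourier_mass n d p s = 0"
proof -
  define excess where "excess s = sphere_char_sum s k - krawtchouk n k 1" for s
  have excess_pos: "excess s > 0" if "s \<in> cube n" "weight s \<noteq> 1" "weight s \<noteq> n - 1" for s
    using that krawtchouk_at_1_less[OF nk, of "weight s"] weight_le_length[of s]
    by (simp add: excess_def sphere_char_sum_eq_krawtchouk cube_def)
  have excess_nonneg: "excess s \<ge> 0" if "s \<in> cube n" for s
    using that krawtchouk_at_1_le[OF nk, of "weight s"] weight_le_length[of s]
    by (simp add: excess_def sphere_char_sum_eq_krawtchouk cube_def)
  have "(\<Sum>s\<in>cube n. excess s * fourier_mass n d p s) = 0"
    using adjacent_inner_sum_excess[OF unit, where k = k and c = "krawtchouk n k 1"]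
      adjacent_inner_sum_eq_of_tight[OF nk unit tight] krawtchouk_at_1_eq_hamming_cosine[of k n] nk
    by (simp add: excess_def mult_ac)
  then have "excess s * fourier_mass n d p s = 0"
    using s excess_nonneg fourier_mass_nonneg finite_cube
    by (simp add: sum_nonneg_eq_0_iff)
  then show ?thesis
    using excess_pos[OF s] by simp
qed

lemma sum_chi_inner_eq_0:
  assumes "fourier_mass n d p s = 0"
  shows "(\<Sum>y\<in>H_verts n. chi s y * inner_d d (p x) (p y)) = 0"
proof -
  have "(\<Sum>y\<in>H_verts n. chi s y * p y r) = 0" if "r < d" for r
    using assms that by (simp add: fourier_mass_def sum_nonneg_eq_0_iff)
  then have "(\<Sum>r<d. p x r * (\<Sum>y\<in>H_verts n. chi s y * p y r)) = 0"
    by simp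
  then show ?thesis
    by (simp add: inner_d_def sum_distrib_left sum.swap[of _ "H_verts n"] mult_ac)
qed

lemma gram_row_expansion:
  assumes x: "x \<in> H_verts n" and n: "n \<ge> 1"
    and vanish: "\<And>s. s \<in> cube n \<Longrightarrow> weight s \<noteq> 1 \<Longrightarrow> weight s \<noteq> n - 1 \<Longrightarrow> fourier_mass n d p s = 0"
  obtains a where "\<And>y. y \<in> H_verts n \<Longrightarrow> inner_d d (p x) (p y) = (\<Sum>i<n. a i * sgn_bool (y ! i))"
proof -
  let ?E = "H_verts n"
  define g where "g y = inner_d d (p x) (p y)" for y
  define g_hat where "g_hat s = (\<Sum>y\<in>?E. chi s y * g y)" for s
  define Good where "Good = {s \<in> cube n. weight s = 1 \<or> weight s = n - 1}"
  \<comment> \<open>On even vectors a character of weight \<open>n - 1\<close> agrees with its complement of weight 1.\<close>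
  define u where "u s = (if weight s = 1 then s else map Not s)" for s
  define a where "a i = (\<Sum>s\<in>Good. if u s ! i then g_hat s else 0) / 2 ^ n" for i
  have u: "length (u s) = n" "weight (u s) = 1" if "s \<in> Good" for s
    using that n by (auto simp: Good_def cube_def u_def weight_map_Not)
  have chi_Good: "chi s y = (\<Sum>i<n. if u s ! i then sgn_bool (y ! i) else 0)"
    if "s \<in> Good" "y \<in> ?E" for s y
  proof -
    have "chi s y = chi (u s) y"
      using that chi_map_Not[of s y] by (auto simp: u_def Good_def cube_def H_verts_def)
    then show ?thesis
      using chi_weight_1[of y "u s"] u[OF that(1)] that(2) by (simp add: H_verts_def)
  qed
  have "g y = (\<Sum>i<n. a i * sgn_bool (y ! i))" if y: "y \<in> ?E" for y
  proof -
    have "2 ^ n * g y = (\<Sum>s\<in>cube n. chi s y * g_hat s)"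
      using fourier_inversion[OF H_verts_subset_cube y] by (simp add: g_hat_def)
    also have "\<dots> = (\<Sum>s\<in>Good. chi s y * g_hat s)"
      using vanish sum_chi_inner_eq_0
      by (intro sum.mono_neutral_right) (auto simp: finite_cube Good_def g_hat_def g_def)
    also have "\<dots> = (\<Sum>s\<in>Good. \<Sum>i<n. (if u s ! i then g_hat s else 0) * sgn_bool (y ! i))"
      using y by (intro sum.cong refl) (auto simp: chi_Good sum_distrib_right intro!: sum.cong)
    also have "\<dots> = (\<Sum>i<n. (\<Sum>s\<in>Good. if u s ! i then g_hat s else 0) * sgn_bool (y ! i))"
      by (subst sum.swap) (simp add: sum_distrib_right)
    also have "\<dots> = 2 ^ n * (\<Sum>i<n. a i * sgn_bool (y ! i))"
      by (simp add: a_def sum_distrib_left)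
    finally show ?thesis
      by simp
  qed
  then show ?thesis
    using that by (simp add: g_def)
qed

lemma eq_if_card_subset_sums_eq:
  fixes b :: "nat \<Rightarrow> real"
  assumes k: "1 \<le> k" "k < n"
    and sums: "\<And>A. A \<subseteq> {..<n} \<Longrightarrow> card A = k \<Longrightarrow> sum b A = c"
    and ij: "i < n" "j < n"
  shows "b i = b j"
proof (cases "i = j")
  case False
  have "k - 1 \<le> card ({..<n} - {i, j})"
    using ij k False by (simp add: card_Diff_subset)
  then obtain B where B: "B \<subseteq> {..<n} - {i, j}" "card B = k - 1" "finite B"
    by (rule obtain_subset_with_card_n)
  have "b l + sum b B = c" if "l \<in> {i, j}" for l
  proof -
    have "l \<notin> B"
      using B that by auto
    then have "card (insert l B) = k" "insert l B \<subseteq> {..<n}"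
      using B k ij that by auto
    then show ?thesis
      using sums[of "insert l B"] B \<open>l \<notin> B\<close> by simp
  qed
  from this[of i] this[of j] show ?thesis
    by simp
qed simp

lemma gram_row_eq_hamming_cosine:
  fixes G :: "bool list \<Rightarrow> real" and a :: "nat \<Rightarrow> real"
  assumes k: "even k" "1 \<le> k" "k < n"
    and x: "x \<in> H_verts n"
    and form: "\<And>y. y \<in> H_verts n \<Longrightarrow> G y = (\<Sum>i<n. a i * sgn_bool (y ! i))"
    and diag: "G x = 1"
    and edge: "\<And>y. y \<in> H_verts n \<Longrightarrow> H_adj k x y \<Longrightarrow> G y = hamming_cosine n k"
    and y: "y \<in> H_verts n"
  shows "G y = hamming_cosine n (weight (bxor x y))"
proof -
  define b where "b i = a i * sgn_bool (x ! i)" for i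
  have lx: "length x = n" "even (weight x)"
    using x by (auto simp: H_verts_def)
  have a_eq: "a i = b i * sgn_bool (x ! i)" for i
    by (simp add: b_def mult.assoc sgn_bool_mult_self)
  have total: "(\<Sum>i<n. b i) = 1"
    using form[OF x] diag by (simp add: b_def)
  have sums: "sum b A = (1 - hamming_cosine n k) / 2" if A: "A \<subseteq> {..<n}" "card A = k" for A
  proof -
    define z where "z = map (\<lambda>l. l \<in> A) [0..<n]"
    have z: "length z = n" "weight z = k"
      using weight_map_mem_upt[OF A(1)] A(2) by (simp_all add: z_def)
    have y': "bxor x z \<in> H_verts n" "H_adj k x (bxor x z)"
      using even_weight_bxor[of x z] bxor_bxor_cancel[of x z] lx z k(1)
      by (simp_all add: H_verts_def H_adj_def)
    have "G (bxor x z) = (\<Sum>i<n. b i) - 2 * sum b A"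
      using form[OF y'(1)] sum_sgn_bool_bxor_indicator[OF lx(1) A(1), of a] by (simp add: z_def b_def)
    then show ?thesis
      using edge[OF y'] total by simp
  qed
  have const: "b i = b 0" if "i < n" for i
    using eq_if_card_subset_sums_eq[OF k(2,3) sums, of i 0] that k(3) by simp
  have "(\<Sum>i<n. b i) = (\<Sum>i<n. b 0)"
    by (intro sum.cong refl) (use const in blast)
  then have b: "b i = 1 / n" if "i < n" for i
    using const[OF that] total k(3) by (simp add: field_simps)
  have "G y = (\<Sum>i<n. sgn_bool (x ! i) * sgn_bool (y ! i)) / n"
    using form[OF y] b by (simp add: a_eq sum_divide_distrib mult_ac)
  then show ?thesis
    using sum_sgn_bool_mult[of x y] lx y by (simp add: H_verts_def hamming_cosine_def)
qed

lemma hamming_cosine_eq_threshold: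
  assumes "real n < 2 * real k"
  shows "hamming_cosine n k = - 1 / (2 * real k / (2 * real k - real n) - 1)"
  using assms by (simp add: hamming_cosine_def field_simps)

lemma hamming_cosine_le_iff_threshold_le:
  assumes "0 < n" "real n < 2 * real k" "t \<ge> 2"
  shows "hamming_cosine n k \<le> - 1 / (t - 1) \<longleftrightarrow> 2 * real k / (2 * real k - real n) \<le> t"
  using assms by (simp add: hamming_cosine_def field_simps)

lemma vector_chromatic_number_H:
  assumes nk: "even k" "n + 2 \<le> 2 * k" "k \<le> n - 1"
  shows "vector_chromatic_number (H_verts n) (H_adj k) = 2 * real k / (2 * real k - real n)"
    (is "_ = ?t")
  unfolding vector_chromatic_number_def
proof (rule cInf_eq_minimum)
  have "?t \<ge> 2"
    using nk by (simp add: field_simps)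
  moreover have "inner_d n (sign_coloring n x) (sign_coloring n y) = hamming_cosine n (weight (bxor x y))"
    if "x \<in> H_verts n" "y \<in> H_verts n" for x y
    using that by (simp add: H_verts_def inner_sign_coloring)
  moreover have "n \<noteq> 0"
    using nk by simp
  ultimately have "vector_coloring (H_verts n) (H_adj k) ?t n (sign_coloring n)"
    using nk hamming_cosine_eq_threshold[of n k]
    by (simp add: vector_coloring_def H_adj_def bxor_self weight_replicate hamming_cosine_def)
  then show "?t \<in> {t. \<exists>d p. vector_coloring (H_verts n) (H_adj k) t d p}"
    by blast
next
  fix t assume "t \<in> {t. \<exists>d p. vector_coloring (H_verts n) (H_adj k) t d p}"
  then obtain d p where "vector_coloring (H_verts n) (H_adj k) t d p"
    by blast
  then have "t \<ge> 2" "hamming_cosine n k \<le> - 1 / (t - 1)"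
    using hamming_cosine_le_adjacent_bound[OF nk] by (auto simp: vector_coloring_def)
  then show "?t \<le> t"
    using hamming_cosine_le_iff_threshold_le[of n k t] nk by simp
qed

lemma optimal_vector_coloring_H_gram:
  assumes nk: "even k" "n + 2 \<le> 2 * k" "k \<le> n - 1"
    and opt: "optimal_vector_coloring (H_verts n) (H_adj k) d p"
    and xy: "x \<in> H_verts n" "y \<in> H_verts n"
  shows "inner_d d (p x) (p y) = hamming_cosine n (weight (bxor x y))"
proof -
  have unit: "\<forall>x\<in>H_verts n. inner_d d (p x) (p x) = 1"
    and tight: "\<forall>x\<in>H_verts n. \<forall>y\<in>H_verts n. H_adj k x y \<longrightarrow> inner_d d (p x) (p y) \<le> hamming_cosine n k"
    using opt nk hamming_cosine_eq_threshold[of n k]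
    by (auto simp: optimal_vector_coloring_def vector_coloring_def vector_chromatic_number_H)
  obtain a where expansion: "\<And>y. y \<in> H_verts n \<Longrightarrow> inner_d d (p x) (p y) = (\<Sum>i<n. a i * sgn_bool (y ! i))"
  proof (rule gram_row_expansion[OF xy(1)])
    show "n \<ge> 1"
      using nk by simp
  qed (use fourier_mass_eq_0_of_tight[OF nk unit tight] in blast)+
  show ?thesis
  proof (rule gram_row_eq_hamming_cosine[where G = "\<lambda>y. inner_d d (p x) (p y)"])
    show "inner_d d (p x) (p x) = 1"
      using unit xy(1) by blast
    show "inner_d d (p x) (p z) = hamming_cosine n k" if "z \<in> H_verts n" "H_adj k x z" for z
      using adjacent_inner_eq_of_tight[OF nk unit tight xy(1) that] .
  qed (use expansion xy nk in auto)
qed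

theorem theorem3p9:
  fixes n k :: nat
  assumes "n \<ge> 1" and "even k"
    and "real n / 2 + 1 \<le> real k" and "k \<le> n - 1"
  shows "uniquely_vector_colorable (H_verts n) (H_adj k)"
proof -
  have nk: "even k" "n + 2 \<le> 2 * k" "k \<le> n - 1"
    using assms by linarith+
  show ?thesis
    unfolding uniquely_vector_colorable_def
    using optimal_vector_coloring_H_gram[OF nk] by simp
qed

end
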